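(* Let $n\ge 2$, $m\ge1$, $\delta>0$, and $0<k<n$ an integer. Then \[ R_k(\delta) \leq (1 - \rho_k^2)^{-m(m+1)/4} \exp\left(|\rho_k|\, m\,\delta^2\right). \]
   Context: An $m\times m$ GOE matrix is a random symmetric matrix whose entries on and above the diagonal are independent centered normal variables, with variance $2$ on the diagonal and variance $1$ off the diagonal. Two GOE matrices $X,Y$ have correlation $\rho\in(-1,1)$ if the pairs $(X_{ij},Y_{ij})$, $i\le j$, are independent across index pairs, each jointly normal with $\mathrm{corr}(X_{ij},Y_{ij})=\rho$. Let $\rho_k = 1-2k/n$ and \[R_k(\delta) = \frac{\mathbb{P}(\|X_k\| \leq \delta,\ \|Y_k\| \leq \delta)}{\mathbb{P}(\|X\| \leq \delta)^2},\] where $X$ is an $m\times m$ GOE matrix and $X_k,Y_k$ are $m\times m$ GOE matrices with correlation $\rho_k$; $\|\cdot\|$ is the spectral norm. *)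

theory Defs
  imports "HOL-Probability.Probability"
begin

text \<open>Index set of the independent entries of an m x m symmetric matrix
  (m = CARD('m)): unordered pairs {i,j}, i.e. the pairs i \<le> j.\<close>
definition sym_pairs :: "'m::finite set set" where
  "sym_pairs = {{i, j} | i j. True}"

text \<open>Variance of a GOE entry: 2 on the diagonal ({i,i} is a singleton), 1 off it.\<close>
definition goe_var :: "'m set \<Rightarrow> real" where
  "goe_var p = (if card p = 1 then 2 else 1)"

definition sym_mat :: "('m::finite set \<Rightarrow> real) \<Rightarrow> real^'m^'m" where
  "sym_mat g = (\<chi> i j. g {i, j})"

definition spec_norm :: "real^'m^'m \<Rightarrow> real" where
  "spec_norm A = onorm (\<lambda>x. A *v x)"

definition goe_law :: "('m::finite set \<Rightarrow> real) measure" where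
  "goe_law = PiM sym_pairs (\<lambda>p. density lborel (normal_density 0 (sqrt (goe_var p))))"

definition bvn_density :: "real \<Rightarrow> real \<Rightarrow> real \<times> real \<Rightarrow> real" where
  "bvn_density s2 r = (\<lambda>(x, y). exp (- (x\<^sup>2 - 2 * r * x * y + y\<^sup>2) / (2 * s2 * (1 - r\<^sup>2)))
      / (2 * pi * s2 * sqrt (1 - r\<^sup>2)))"

text \<open>Joint law of the entries of two GOE matrices with correlation r:
  the entry pairs (X_ij, Y_ij) are independent over {i,j}, each jointly normal.\<close>
definition corr_goe_law :: "real \<Rightarrow> ('m::finite set \<Rightarrow> real \<times> real) measure" where
  "corr_goe_law r = PiM sym_pairs (\<lambda>p. density lborel (bvn_density (goe_var p) r))"

definition rho :: "nat \<Rightarrow> nat \<Rightarrow> real" where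
  "rho n k = 1 - 2 * real k / real n"

definition R_ratio :: "'m::finite itself \<Rightarrow> nat \<Rightarrow> nat \<Rightarrow> real \<Rightarrow> real" where
  "R_ratio _ n k \<delta> =
     measure (corr_goe_law (rho n k) :: ('m set \<Rightarrow> real \<times> real) measure)
       {g \<in> space (corr_goe_law (rho n k)).
          spec_norm (sym_mat (fst \<circ> g)) \<le> \<delta> \<and> spec_norm (sym_mat (snd \<circ> g)) \<le> \<delta>}
     / (measure (goe_law :: ('m set \<Rightarrow> real) measure)
          {g \<in> space goe_law. spec_norm (sym_mat g) \<le> \<delta>})\<^sup>2"

end

theory Submission
  imports Defs
begin

(* Entrywise, the joint density of (X_ij, Y_ij) with correlation r is at most
   (1 - r^2)^(-1/2) exp(|r| (x^2 + y^2) / (2 sigma^2)) times the density of two independent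
   entries (r = 0). On the event ||X||, ||Y|| <= delta every column of X and of Y has norm at most
   delta, so the squares of the independent entries of X and of Y each sum to at most m delta^2,
   and the exponential factors multiply to at most exp(|r| m delta^2). Integrating this pointwise
   bound over the event, where the uncorrelated pair is an independent pair of GOE matrices, costs
   one factor (1 - r^2)^(-1/2) per independent entry, and there are at most m(m+1)/2 of them. *)

lemma indicator_PiE_eq_prod:
  assumes "finite I" and "x \<in> Pi\<^sub>E I B"
  shows "indicator (Pi\<^sub>E I A) x = (\<Prod>i\<in>I. indicator (A i) (x i) :: 'c::comm_semiring_1)"
proof (cases "x \<in> Pi\<^sub>E I A")
  case True
  then show ?thesis by (simp add: PiE_iff)
next
  case False
  then obtain j where "j \<in> I" "x j \<notin> A j"
    using assms(2) by (auto simp: PiE_iff)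
  then have "(\<Prod>i\<in>I. indicator (A i) (x i) :: 'c) = 0"
    using assms(1) by (intro prod_zero) (auto intro!: bexI[of _ j])
  then show ?thesis using False by simp
qed

lemma borel_measurable_prod_component:
  assumes "\<And>i. f i \<in> borel_measurable (M i)"
  shows "(\<lambda>x. \<Prod>i\<in>I. f i (x i) :: ennreal) \<in> borel_measurable (PiM I M)"
proof (rule borel_measurable_prod_ennreal)
  fix i assume i: "i \<in> I"
  show "(\<lambda>x. f i (x i)) \<in> borel_measurable (PiM I M)"
    by (rule measurable_compose[OF measurable_component_singleton[OF i] assms])
qed

lemma emeasure_density_PiM_PiE:
  fixes M :: "'i \<Rightarrow> 'a measure" and f :: "'i \<Rightarrow> 'a \<Rightarrow> ennreal"
  assumes I: "finite I" and sf: "\<And>i. sigma_finite_measure (M i)"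
    and fm: "\<And>i. f i \<in> borel_measurable (M i)" and A: "\<And>i. i \<in> I \<Longrightarrow> A i \<in> sets (M i)"
  shows "emeasure (density (PiM I M) (\<lambda>x. \<Prod>i\<in>I. f i (x i))) (Pi\<^sub>E I A)
    = (\<Prod>i\<in>I. emeasure (density (M i) (f i)) (A i))"
proof -
  interpret product_sigma_finite M
    by (simp add: product_sigma_finite_def sf)
  have "Pi\<^sub>E I A \<in> sets (PiM I M)"
    using A by (rule sets_PiM_I_finite[OF I])
  then have "emeasure (density (PiM I M) (\<lambda>x. \<Prod>i\<in>I. f i (x i))) (Pi\<^sub>E I A)
      = (\<integral>\<^sup>+ x. (\<Prod>i\<in>I. f i (x i)) * indicator (Pi\<^sub>E I A) x \<partial>PiM I M)"
    by (rule emeasure_density[OF borel_measurable_prod_component[OF fm]])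
  also have "\<dots> = (\<integral>\<^sup>+ x. (\<Prod>i\<in>I. f i (x i) * indicator (A i) (x i)) \<partial>PiM I M)"
    using I by (intro nn_integral_cong) (simp add: indicator_PiE_eq_prod space_PiM prod.distrib)
  also have "\<dots> = (\<Prod>i\<in>I. \<integral>\<^sup>+ y. f i y * indicator (A i) y \<partial>M i)"
    using A fm by (intro product_nn_integral_prod[OF I] borel_measurable_times_ennreal) auto
  also have "\<dots> = (\<Prod>i\<in>I. emeasure (density (M i) (f i)) (A i))"
    using A fm by (intro prod.cong refl emeasure_density[symmetric]) auto
  finally show ?thesis .
qed

lemma PiM_density:
  fixes M :: "'i \<Rightarrow> 'a measure" and f :: "'i \<Rightarrow> 'a \<Rightarrow> ennreal"
  assumes I: "finite I"
    and sf: "\<And>i. sigma_finite_measure (M i)"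
    and sfd: "\<And>i. sigma_finite_measure (density (M i) (f i))"
    and fm: "\<And>i. f i \<in> borel_measurable (M i)"
  shows "PiM I (\<lambda>i. density (M i) (f i)) = density (PiM I M) (\<lambda>x. \<Prod>i\<in>I. f i (x i))"
proof -
  interpret product_sigma_finite "\<lambda>i. density (M i) (f i)"
    by (simp add: product_sigma_finite_def sfd)
  have "density (PiM I M) (\<lambda>x. \<Prod>i\<in>I. f i (x i)) = PiM I (\<lambda>i. density (M i) (f i))"
  proof (rule PiM_eqI[OF I])
    show "sets (density (PiM I M) (\<lambda>x. \<Prod>i\<in>I. f i (x i))) = sets (PiM I (\<lambda>i. density (M i) (f i)))"
      by (simp only: sets_density) (rule sets_PiM_cong; simp)
  next
    fix A assume "\<And>i. i \<in> I \<Longrightarrow> A i \<in> sets (density (M i) (f i))"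
    then show "emeasure (density (PiM I M) (\<lambda>x. \<Prod>i\<in>I. f i (x i))) (Pi\<^sub>E I A)
        = (\<Prod>i\<in>I. emeasure (density (M i) (f i)) (A i))"
      by (intro emeasure_density_PiM_PiE[OF I sf fm]) simp
  qed
  then show ?thesis by simp
qed

lemma emeasure_density_le_cmult:
  assumes f: "f \<in> borel_measurable M" and h: "h \<in> borel_measurable M" and S: "S \<in> sets M"
    and le: "\<And>x. x \<in> S \<Longrightarrow> f x \<le> c * h x"
  shows "emeasure (density M f) S \<le> c * emeasure (density M h) S"
proof -
  have "emeasure (density M f) S = (\<integral>\<^sup>+ x. f x * indicator S x \<partial>M)"
    using f S by (rule emeasure_density)
  also have "\<dots> \<le> (\<integral>\<^sup>+ x. c * (h x * indicator S x) \<partial>M)"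
    using le by (intro nn_integral_mono) (simp split: split_indicator)
  also have "\<dots> = c * (\<integral>\<^sup>+ x. h x * indicator S x \<partial>M)"
    using h S by (intro nn_integral_cmult) auto
  also have "\<dots> = c * emeasure (density M h) S"
    using h S by (simp add: emeasure_density)
  finally show ?thesis .
qed

definition unzip_fun :: "'i set \<Rightarrow> ('i \<Rightarrow> 'a \<times> 'b) \<Rightarrow> ('i \<Rightarrow> 'a) \<times> ('i \<Rightarrow> 'b)" where
  "unzip_fun I g = (\<lambda>i\<in>I. fst (g i), \<lambda>i\<in>I. snd (g i))"

lemma measurable_unzip_fun:
  "unzip_fun I \<in> measurable (PiM I (\<lambda>i. M i \<Otimes>\<^sub>M N i)) (PiM I M \<Otimes>\<^sub>M PiM I N)"
  unfolding unzip_fun_def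
proof (rule measurable_Pair)
  show "(\<lambda>g. \<lambda>i\<in>I. fst (g i)) \<in> measurable (PiM I (\<lambda>i. M i \<Otimes>\<^sub>M N i)) (PiM I M)"
    by (rule measurable_restrict, rule measurable_compose[OF _ measurable_fst], erule measurable_component_singleton)
  show "(\<lambda>g. \<lambda>i\<in>I. snd (g i)) \<in> measurable (PiM I (\<lambda>i. M i \<Otimes>\<^sub>M N i)) (PiM I N)"
    by (rule measurable_restrict, rule measurable_compose[OF _ measurable_snd], erule measurable_component_singleton)
qed

lemma vimage_unzip_fun_PiE_Times:
  assumes "\<And>i. i \<in> I \<Longrightarrow> A i \<subseteq> space (M i)" and "\<And>i. i \<in> I \<Longrightarrow> B i \<subseteq> space (N i)"
  shows "unzip_fun I -` (Pi\<^sub>E I A \<times> Pi\<^sub>E I B) \<inter> space (PiM I (\<lambda>i. M i \<Otimes>\<^sub>M N i))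
           = Pi\<^sub>E I (\<lambda>i. A i \<times> B i)"
  using assms
  by (auto simp: unzip_fun_def space_PiM PiE_iff space_pair_measure extensional_def mem_Times_iff; blast)

lemma sets_pair_PiM_eq_sigma_rectangles:
  assumes "finite I"
  shows "sets (PiM I M \<Otimes>\<^sub>M PiM I N) = sigma_sets (space (PiM I M) \<times> space (PiM I N))
           {a \<times> b | a b. a \<in> prod_algebra I M \<and> b \<in> prod_algebra I N}"
proof -
  have spM: "space (PiM I M) \<in> prod_algebra I M" and spN: "space (PiM I N) \<in> prod_algebra I N"
    unfolding space_PiM using assms by (auto intro: prod_algebraI_finite)
  have M: "prod_algebra I M \<subseteq> Pow (space (PiM I M))" and N: "prod_algebra I N \<subseteq> Pow (space (PiM I N))"
    by (simp_all add: space_PiM prod_algebra_sets_into_space)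
  then have "sets (PiM I M \<Otimes>\<^sub>M PiM I N) = sets (sigma (space (PiM I M) \<times> space (PiM I N))
           {a \<times> b | a b. a \<in> prod_algebra I M \<and> b \<in> prod_algebra I N})"
    using spM spN
    by (intro sets_pair_eq[where Ca="{space (PiM I M)}" and Cb="{space (PiM I N)}"])
       (auto simp: sets_PiM space_PiM)
  also have "\<dots> = sigma_sets (space (PiM I M) \<times> space (PiM I N))
           {a \<times> b | a b. a \<in> prod_algebra I M \<and> b \<in> prod_algebra I N}"
    using M N by (intro sets_measure_of) auto
  finally show ?thesis .
qed

lemma Int_stable_prod_algebra_Times:
  "Int_stable {a \<times> b | a b. a \<in> prod_algebra I M \<and> b \<in> prod_algebra I N}"
proof (rule Int_stableI)
  fix X Y assume "X \<in> {a \<times> b | a b. a \<in> prod_algebra I M \<and> b \<in> prod_algebra I N}"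
    and "Y \<in> {a \<times> b | a b. a \<in> prod_algebra I M \<and> b \<in> prod_algebra I N}"
  then obtain a b c d where XY: "X = a \<times> b" "Y = c \<times> d"
    and ab: "a \<in> prod_algebra I M" "b \<in> prod_algebra I N"
    and cd: "c \<in> prod_algebra I M" "d \<in> prod_algebra I N"
    by auto
  have "a \<inter> c \<in> prod_algebra I M" "b \<inter> d \<in> prod_algebra I N"
    using ab cd Int_stable_prod_algebra[of I M] Int_stable_prod_algebra[of I N]
    by (auto simp: Int_stable_def)
  moreover have "X \<inter> Y = (a \<inter> c) \<times> (b \<inter> d)"
    unfolding XY by auto
  ultimately show "X \<inter> Y \<in> {a \<times> b | a b. a \<in> prod_algebra I M \<and> b \<in> prod_algebra I N}"
    by blast
qed

lemma emeasure_pair_PiM_PiE_Times: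
  assumes I: "finite I" and M: "\<And>i. prob_space (M i)" and N: "\<And>i. prob_space (N i)"
    and A: "\<And>i. i \<in> I \<Longrightarrow> A i \<in> sets (M i)" and B: "\<And>i. i \<in> I \<Longrightarrow> B i \<in> sets (N i)"
  shows "emeasure (PiM I M \<Otimes>\<^sub>M PiM I N) (Pi\<^sub>E I A \<times> Pi\<^sub>E I B)
           = emeasure (PiM I (\<lambda>i. M i \<Otimes>\<^sub>M N i)) (Pi\<^sub>E I (\<lambda>i. A i \<times> B i))"
proof -
  interpret PM: product_sigma_finite M
    by (simp add: product_sigma_finite_def M prob_space_imp_sigma_finite)
  interpret PN: product_sigma_finite N
    by (simp add: product_sigma_finite_def N prob_space_imp_sigma_finite)
  interpret PMN: product_sigma_finite "\<lambda>i. M i \<Otimes>\<^sub>M N i"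
    by (simp add: product_sigma_finite_def M N prob_space_pair prob_space_imp_sigma_finite)
  have "sigma_finite_measure (PiM I N)"
    by (rule prob_space_imp_sigma_finite, rule prob_space_PiM, rule N)
  then have "emeasure (PiM I M \<Otimes>\<^sub>M PiM I N) (Pi\<^sub>E I A \<times> Pi\<^sub>E I B)
      = emeasure (PiM I M) (Pi\<^sub>E I A) * emeasure (PiM I N) (Pi\<^sub>E I B)"
    by (rule sigma_finite_measure.emeasure_pair_measure_Times[OF _ sets_PiM_I_finite[OF I A]
          sets_PiM_I_finite[OF I B]])
  also have "\<dots> = (\<Prod>i\<in>I. emeasure (M i) (A i)) * (\<Prod>i\<in>I. emeasure (N i) (B i))"
    using I A B by (simp add: PM.emeasure_PiM PN.emeasure_PiM)
  also have "\<dots> = (\<Prod>i\<in>I. emeasure (M i \<Otimes>\<^sub>M N i) (A i \<times> B i))"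
  proof -
    have "emeasure (M i \<Otimes>\<^sub>M N i) (A i \<times> B i) = emeasure (M i) (A i) * emeasure (N i) (B i)"
      if "i \<in> I" for i
      using A[OF that] B[OF that] N
      by (intro sigma_finite_measure.emeasure_pair_measure_Times) (auto intro: prob_space_imp_sigma_finite)
    then show ?thesis by (simp add: prod.distrib)
  qed
  also have "\<dots> = emeasure (PiM I (\<lambda>i. M i \<Otimes>\<^sub>M N i)) (Pi\<^sub>E I (\<lambda>i. A i \<times> B i))"
    using I A B by (simp add: PMN.emeasure_PiM)
  finally show ?thesis .
qed

lemma emeasure_distr_unzip_fun_PiE_Times:
  assumes I: "finite I" and M: "\<And>i. prob_space (M i)" and N: "\<And>i. prob_space (N i)"
    and A: "\<And>i. i \<in> I \<Longrightarrow> A i \<in> sets (M i)" and B: "\<And>i. i \<in> I \<Longrightarrow> B i \<in> sets (N i)"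
  shows "emeasure (distr (PiM I (\<lambda>i. M i \<Otimes>\<^sub>M N i)) (PiM I M \<Otimes>\<^sub>M PiM I N) (unzip_fun I))
           (Pi\<^sub>E I A \<times> Pi\<^sub>E I B) = emeasure (PiM I M \<Otimes>\<^sub>M PiM I N) (Pi\<^sub>E I A \<times> Pi\<^sub>E I B)"
    (is "emeasure (distr ?L ?R _) ?X = _")
proof -
  have "?X \<in> sets ?R"
    by (intro pair_measureI sets_PiM_I_finite[OF I A] sets_PiM_I_finite[OF I B])
  then have "emeasure (distr ?L ?R (unzip_fun I)) ?X = emeasure ?L (unzip_fun I -` ?X \<inter> space ?L)"
    by (rule emeasure_distr[OF measurable_unzip_fun])
  also have "unzip_fun I -` ?X \<inter> space ?L = Pi\<^sub>E I (\<lambda>i. A i \<times> B i)"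
    using A B by (intro vimage_unzip_fun_PiE_Times) (simp_all add: sets.sets_into_space)
  also have "emeasure ?L (Pi\<^sub>E I (\<lambda>i. A i \<times> B i)) = emeasure ?R ?X"
    by (rule emeasure_pair_PiM_PiE_Times[OF I M N A B, symmetric])
  finally show ?thesis .
qed

lemma distr_unzip_fun_PiM_pair_measure:
  assumes I: "finite I" and M: "\<And>i. prob_space (M i)" and N: "\<And>i. prob_space (N i)"
  shows "distr (PiM I (\<lambda>i. M i \<Otimes>\<^sub>M N i)) (PiM I M \<Otimes>\<^sub>M PiM I N) (unzip_fun I) = PiM I M \<Otimes>\<^sub>M PiM I N"
    (is "distr ?L ?R _ = ?R")
proof (rule sym, rule measure_eqI_generator_eq[OF Int_stable_prod_algebra_Times, where
      \<Omega>="space (PiM I M) \<times> space (PiM I N)" and A="\<lambda>_. space (PiM I M) \<times> space (PiM I N)"])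
  let ?\<Omega> = "space (PiM I M) \<times> space (PiM I N)"
  let ?E = "{a \<times> b | a b. a \<in> prod_algebra I M \<and> b \<in> prod_algebra I N}"
  have "prod_algebra I M \<subseteq> Pow (space (PiM I M))" "prod_algebra I N \<subseteq> Pow (space (PiM I N))"
    by (simp_all add: space_PiM prod_algebra_sets_into_space)
  then show "?E \<subseteq> Pow ?\<Omega>"
    by auto
  show "sets ?R = sigma_sets ?\<Omega> ?E" "sets (distr ?L ?R (unzip_fun I)) = sigma_sets ?\<Omega> ?E"
    using sets_pair_PiM_eq_sigma_rectangles[OF I] by simp_all
  have "space (PiM I M) \<in> prod_algebra I M" "space (PiM I N) \<in> prod_algebra I N"
    unfolding space_PiM using I by (auto intro: prod_algebraI_finite)
  then show "range (\<lambda>_. ?\<Omega>) \<subseteq> ?E" "(\<Union>i::nat. ?\<Omega>) = ?\<Omega>"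
    by auto
  have "prob_space ?R"
    using M N by (simp add: prob_space_pair prob_space_PiM)
  from prob_space.emeasure_space_1[OF this] show "emeasure ?R ?\<Omega> \<noteq> \<infinity>" for i :: nat
    by (simp add: space_pair_measure)
  fix X assume "X \<in> ?E"
  then obtain a b where X: "X = a \<times> b" and a: "a \<in> prod_algebra I M" and b: "b \<in> prod_algebra I N"
    by blast
  obtain A where "a = Pi\<^sub>E I A" and "A \<in> (\<Pi> i\<in>I. sets (M i))"
    using a by (rule prod_algebraE_all)
  moreover obtain B where "b = Pi\<^sub>E I B" and "B \<in> (\<Pi> i\<in>I. sets (N i))"
    using b by (rule prod_algebraE_all)
  ultimately have "X = Pi\<^sub>E I A \<times> Pi\<^sub>E I B"
    and A: "\<And>i. i \<in> I \<Longrightarrow> A i \<in> sets (M i)" and B: "\<And>i. i \<in> I \<Longrightarrow> B i \<in> sets (N i)"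
    using X by auto
  then show "emeasure ?R X = emeasure (distr ?L ?R (unzip_fun I)) X"
    using emeasure_distr_unzip_fun_PiE_Times[OF I M N A B] by simp
qed

lemma bvn_density_uncorrelated:
  assumes "s2 > 0"
  shows "bvn_density s2 0 (x, y) = normal_density 0 (sqrt s2) x * normal_density 0 (sqrt s2) y"
proof -
  have "sqrt (2 * pi * s2) * sqrt (2 * pi * s2) = 2 * pi * s2" using assms by simp
  then show ?thesis
    using assms by (simp add: bvn_density_def normal_density_def exp_add[symmetric] diff_divide_distrib)
qed

lemma bvn_density_nonneg:
  assumes "\<bar>r\<bar> < 1" and "s2 > 0"
  shows "0 \<le> bvn_density s2 r z"
proof -
  have "0 < 1 - r\<^sup>2" using assms(1) by (simp add: abs_square_less_1)
  then show ?thesis using assms(2) by (simp add: bvn_density_def case_prod_beta)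
qed

lemma borel_measurable_bvn_density:
  "(\<lambda>z. ennreal (bvn_density s r z)) \<in> borel_measurable (lborel :: (real \<times> real) measure)"
proof -
  have "bvn_density s r \<in> borel_measurable borel"
    by (rule borel_measurable_continuous_onI)
       (unfold bvn_density_def case_prod_beta divide_inverse, intro continuous_intros)
  then show ?thesis by simp
qed

lemma bvn_quadratic_form_ge:
  fixes r x y :: real
  assumes "\<bar>r\<bar> < 1"
  shows "(1 - \<bar>r\<bar>) * (x\<^sup>2 + y\<^sup>2) * (1 - r\<^sup>2) \<le> x\<^sup>2 - 2 * r * x * y + y\<^sup>2"
proof -
  have "2 * \<bar>x\<bar> * \<bar>y\<bar> \<le> \<bar>x\<bar>\<^sup>2 + \<bar>y\<bar>\<^sup>2"
    by (rule sum_squares_bound)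
  then have "\<bar>2 * x * y\<bar> \<le> x\<^sup>2 + y\<^sup>2"
    by (simp add: abs_mult)
  then have "\<bar>r\<bar> * \<bar>2 * x * y\<bar> \<le> \<bar>r\<bar> * (x\<^sup>2 + y\<^sup>2)"
    by (rule mult_left_mono) simp
  moreover have "2 * r * x * y \<le> \<bar>r\<bar> * \<bar>2 * x * y\<bar>"
    using abs_ge_self[of "r * (2 * x * y)"] by (simp add: abs_mult mult.assoc)
  moreover have "(1 - \<bar>r\<bar>) * (x\<^sup>2 + y\<^sup>2) * (1 - r\<^sup>2) \<le> (1 - \<bar>r\<bar>) * (x\<^sup>2 + y\<^sup>2)"
    using assms abs_square_le_1[of r] by (intro mult_right_le_one_le) auto
  moreover have "(1 - \<bar>r\<bar>) * (x\<^sup>2 + y\<^sup>2) = x\<^sup>2 + y\<^sup>2 - \<bar>r\<bar> * (x\<^sup>2 + y\<^sup>2)"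
    by (simp add: algebra_simps)
  ultimately show ?thesis
    by linarith
qed

lemma bvn_density_le_uncorrelated:
  assumes s: "s2 > 0" and r: "\<bar>r\<bar> < 1"
  shows "bvn_density s2 r (x, y)
           \<le> (1 - r\<^sup>2) powr (-1/2) * exp (\<bar>r\<bar> * (x\<^sup>2 + y\<^sup>2) / (2 * s2)) * bvn_density s2 0 (x, y)"
proof -
  define S where "S = x\<^sup>2 + y\<^sup>2"
  have d: "0 < 1 - r\<^sup>2" using r by (simp add: abs_square_less_1)
  have c: "(1 - r\<^sup>2) powr (-1/2) = 1 / sqrt (1 - r\<^sup>2)"
    using d by (simp add: powr_minus_divide powr_half_sqrt)
  have "(1 - \<bar>r\<bar>) * S / (2 * s2) \<le> (x\<^sup>2 - 2 * r * x * y + y\<^sup>2) / (2 * s2 * (1 - r\<^sup>2))"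
    using bvn_quadratic_form_ge[OF r, of x y] s d unfolding S_def
    by (simp add: pos_le_divide_eq divide_le_eq mult.commute mult.left_commute)
  moreover have "\<bar>r\<bar> * S / (2 * s2) + - S / (2 * s2) = - ((1 - \<bar>r\<bar>) * S / (2 * s2))"
    by (simp add: diff_divide_distrib add_divide_distrib algebra_simps)
  ultimately have "- (x\<^sup>2 - 2 * r * x * y + y\<^sup>2) / (2 * s2 * (1 - r\<^sup>2))
      \<le> \<bar>r\<bar> * S / (2 * s2) + - S / (2 * s2)"
    by linarith
  then have "bvn_density s2 r (x, y)
      \<le> exp (\<bar>r\<bar> * S / (2 * s2) + - S / (2 * s2)) / (2 * pi * s2 * sqrt (1 - r\<^sup>2))"
    unfolding bvn_density_def using s d by (auto intro!: divide_right_mono)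
  also have "\<dots>
      = (1 - r\<^sup>2) powr (-1/2) * exp (\<bar>r\<bar> * S / (2 * s2)) * (exp (- S / (2 * s2)) / (2 * pi * s2))"
    unfolding c exp_add using s d by (simp add: field_simps)
  finally show ?thesis by (simp add: S_def bvn_density_def)
qed

lemma norm_column_le_spec_norm: "norm (column j A) \<le> spec_norm A"
proof -
  have "norm (column j A) = norm (A *v axis j 1)"
    by (simp add: matrix_vector_mult_basis)
  also have "\<dots> \<le> onorm (\<lambda>x. A *v x) * norm (axis j (1::real))"
    by (rule onorm[OF matrix_vector_mul_bounded_linear])
  finally show ?thesis by (simp add: spec_norm_def norm_axis_1)
qed

lemma sum_sym_pairs_square_le:
  fixes g :: "'m::finite set \<Rightarrow> real"
  assumes "spec_norm (sym_mat g) \<le> \<delta>"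
  shows "(\<Sum>p\<in>sym_pairs. (g p)\<^sup>2) \<le> real CARD('m) * \<delta>\<^sup>2"
proof -
  have column: "(\<Sum>i\<in>UNIV. (g {i, j})\<^sup>2) \<le> \<delta>\<^sup>2" for j :: 'm
  proof -
    have "norm (column j (sym_mat g)) \<le> \<delta>"
      using norm_column_le_spec_norm[of j "sym_mat g"] assms by linarith
    then have "(norm (column j (sym_mat g)))\<^sup>2 \<le> \<delta>\<^sup>2"
      by (rule power_mono) simp
    moreover have "(norm (column j (sym_mat g)))\<^sup>2 = (\<Sum>i\<in>UNIV. (g {i, j})\<^sup>2)"
      by (simp add: norm_vec_def L2_set_def column_def sym_mat_def sum_nonneg)
    ultimately show ?thesis by simp
  qed
  have "sym_pairs = (\<lambda>(i, j). {i, j}) ` (UNIV \<times> (UNIV :: 'm set))"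
    unfolding sym_pairs_def by auto
  then have "(\<Sum>p\<in>sym_pairs. (g p)\<^sup>2) \<le> (\<Sum>(i, j)\<in>UNIV \<times> (UNIV :: 'm set). (g {i, j})\<^sup>2)"
    using sum_image_le[of "UNIV \<times> (UNIV :: 'm set)" "\<lambda>p. (g p)\<^sup>2" "\<lambda>(i, j). {i, j}"]
    by (simp add: case_prod_unfold comp_def)
  also have "\<dots> = (\<Sum>i\<in>UNIV. \<Sum>j\<in>UNIV. (g {i, j})\<^sup>2)"
    by (rule sum.cartesian_product[symmetric])
  also have "\<dots> = (\<Sum>j\<in>UNIV. \<Sum>i\<in>UNIV. (g {i, j})\<^sup>2)"
    by (rule sum.swap)
  also have "\<dots> \<le> (\<Sum>j\<in>(UNIV :: 'm set). \<delta>\<^sup>2)"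
    by (rule sum_mono) (rule column)
  finally show ?thesis by simp
qed

lemma card_sym_pairs_le: "2 * card (sym_pairs :: 'm::finite set set) \<le> CARD('m) * (CARD('m) + 1)"
proof -
  let ?m = "CARD('m)"
  have "(sym_pairs :: 'm set set) \<subseteq> {B. B \<subseteq> UNIV \<and> card B = 1} \<union> {B. B \<subseteq> UNIV \<and> card B = 2}"
  proof
    fix B :: "'m set" assume "B \<in> sym_pairs"
    then obtain i j where "B = {i, j}" unfolding sym_pairs_def by auto
    then show "B \<in> {B. B \<subseteq> UNIV \<and> card B = 1} \<union> {B. B \<subseteq> UNIV \<and> card B = 2}"
      by (cases "i = j") auto
  qed
  then have "card (sym_pairs :: 'm set set)
      \<le> card {B. B \<subseteq> (UNIV :: 'm set) \<and> card B = 1} + card {B. B \<subseteq> (UNIV :: 'm set) \<and> card B = 2}"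
    by (meson card_Un_le card_mono finite order_trans)
  also have "\<dots> = ?m + ?m * (?m - 1) div 2"
    using n_subsets[of "UNIV :: 'm set" 1] n_subsets[of "UNIV :: 'm set" 2] by (simp add: choose_two)
  finally have "2 * card (sym_pairs :: 'm set set) \<le> 2 * ?m + ?m * (?m - 1)"
    by linarith
  also have "\<dots> = ?m * (?m + 1)"
    by (cases ?m) (simp_all add: algebra_simps)
  finally show ?thesis .
qed

lemma sym_mat_restrict: "sym_mat (restrict g sym_pairs) = sym_mat g"
  unfolding sym_mat_def by (simp add: vec_eq_iff sym_pairs_def) blast

definition goe_ball :: "real \<Rightarrow> ('m::finite set \<Rightarrow> real) set" where
  "goe_ball \<delta> = {g \<in> Pi\<^sub>E sym_pairs (\<lambda>_. UNIV). spec_norm (sym_mat g) \<le> \<delta>}"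

definition goe_pair_ball :: "real \<Rightarrow> ('m::finite set \<Rightarrow> real \<times> real) set" where
  "goe_pair_ball \<delta> = {g \<in> Pi\<^sub>E sym_pairs (\<lambda>_. UNIV).
     spec_norm (sym_mat (fst \<circ> g)) \<le> \<delta> \<and> spec_norm (sym_mat (snd \<circ> g)) \<le> \<delta>}"

lemma goe_var_pos: "0 < goe_var p"
  by (simp add: goe_var_def)

lemma space_goe_law: "space goe_law = Pi\<^sub>E sym_pairs (\<lambda>_. UNIV)"
  by (simp add: goe_law_def space_PiM)

lemma space_corr_goe_law: "space (corr_goe_law r) = Pi\<^sub>E sym_pairs (\<lambda>_. UNIV)"
  by (simp add: corr_goe_law_def space_PiM)

lemma sets_corr_goe_law: "sets (corr_goe_law r) = sets (PiM sym_pairs (\<lambda>_. lborel))"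
  unfolding corr_goe_law_def by (rule sets_PiM_cong) simp_all

lemma R_ratio_eq_goe_balls:
  "R_ratio TYPE('m::finite) n k \<delta>
     = measure (corr_goe_law (rho n k)) (goe_pair_ball \<delta> :: ('m set \<Rightarrow> real \<times> real) set)
       / (measure goe_law (goe_ball \<delta> :: ('m set \<Rightarrow> real) set))\<^sup>2"
  by (simp add: R_ratio_def goe_ball_def goe_pair_ball_def space_goe_law space_corr_goe_law)

lemma prob_space_goe_marginal: "prob_space (density lborel (normal_density 0 (sqrt (goe_var p))))"
  by (rule prob_space_normal_density) (simp add: goe_var_pos)

lemma prob_space_goe_law: "prob_space goe_law"
  unfolding goe_law_def by (rule prob_space_PiM) (rule prob_space_goe_marginal)

lemma corr_goe_law_eq_density:
  "(corr_goe_law r :: ('m::finite set \<Rightarrow> real \<times> real) measure) = density (PiM sym_pairs (\<lambda>_. lborel))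
     (\<lambda>g. \<Prod>p\<in>sym_pairs. ennreal (bvn_density (goe_var p) r (g p)))"
  unfolding corr_goe_law_def
proof (rule PiM_density)
  show "sigma_finite_measure (density lborel (\<lambda>z. ennreal (bvn_density (goe_var p) r z)))"
    for p :: "'m set"
    using borel_measurable_bvn_density
    by (subst sigma_finite_measure.sigma_finite_iff_density_finite[OF lborel.sigma_finite_measure_axioms])
       simp_all
qed (use borel_measurable_bvn_density in \<open>simp_all add: lborel.sigma_finite_measure_axioms\<close>)

lemma corr_goe_law_zero_eq_PiM_pair_measure:
  "corr_goe_law 0 = PiM sym_pairs (\<lambda>p. density lborel (normal_density 0 (sqrt (goe_var p)))
     \<Otimes>\<^sub>M density lborel (normal_density 0 (sqrt (goe_var p))))"
  unfolding corr_goe_law_def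
proof (rule PiM_cong[OF refl])
  fix p :: "'m set"
  let ?\<phi> = "normal_density 0 (sqrt (goe_var p))"
  have "density lborel ?\<phi> \<Otimes>\<^sub>M density lborel ?\<phi>
      = density (lborel \<Otimes>\<^sub>M lborel) (\<lambda>(x, y). ennreal (?\<phi> x) * ennreal (?\<phi> y))"
    by (rule pair_measure_density)
       (simp_all add: prob_space_imp_sigma_finite prob_space_goe_marginal lborel.sigma_finite_measure_axioms)
  also have "\<dots> = density lborel (bvn_density (goe_var p) 0)"
    unfolding lborel_prod
    by (rule arg_cong[where f="density lborel"])
       (auto simp: fun_eq_iff bvn_density_uncorrelated goe_var_pos ennreal_mult)
  finally show "density lborel (bvn_density (goe_var p) 0) = density lborel ?\<phi> \<Otimes>\<^sub>M density lborel ?\<phi>"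
    by simp
qed

lemma distr_unzip_fun_corr_goe_law_zero:
  "distr (corr_goe_law 0) (goe_law \<Otimes>\<^sub>M goe_law) (unzip_fun sym_pairs) = goe_law \<Otimes>\<^sub>M goe_law"
  unfolding corr_goe_law_zero_eq_PiM_pair_measure goe_law_def
  by (rule distr_unzip_fun_PiM_pair_measure) (simp_all add: prob_space_goe_marginal)

lemma vimage_unzip_fun_goe_ball:
  "unzip_fun sym_pairs -` (goe_ball \<delta> \<times> goe_ball \<delta>) \<inter> space (corr_goe_law r)
     = (goe_pair_ball \<delta> :: ('m::finite set \<Rightarrow> real \<times> real) set)"
proof -
  have "sym_mat (\<lambda>p\<in>sym_pairs. fst (g p)) = sym_mat (fst \<circ> g)"
    and "sym_mat (\<lambda>p\<in>sym_pairs. snd (g p)) = sym_mat (snd \<circ> g)" for g :: "'m set \<Rightarrow> real \<times> real"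
    using sym_mat_restrict[of "fst \<circ> g"] sym_mat_restrict[of "snd \<circ> g"] by (simp_all add: comp_def)
  then show ?thesis
    by (auto simp: unzip_fun_def goe_ball_def goe_pair_ball_def space_corr_goe_law)
qed

lemma measurable_unzip_fun_corr_goe_law_zero:
  "unzip_fun sym_pairs \<in> measurable (corr_goe_law 0 :: ('m::finite set \<Rightarrow> real \<times> real) measure)
     (goe_law \<Otimes>\<^sub>M goe_law)"
  unfolding corr_goe_law_zero_eq_PiM_pair_measure goe_law_def by (rule measurable_unzip_fun)

lemma goe_pair_ball_in_sets:
  assumes "(goe_ball \<delta> :: ('m::finite set \<Rightarrow> real) set) \<in> sets goe_law"
  shows "(goe_pair_ball \<delta> :: ('m set \<Rightarrow> real \<times> real) set) \<in> sets (corr_goe_law r)"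
  using measurable_sets[OF measurable_unzip_fun_corr_goe_law_zero pair_measureI[OF assms assms]]
  by (simp add: vimage_unzip_fun_goe_ball sets_corr_goe_law)

lemma emeasure_corr_goe_law_zero_goe_pair_ball:
  assumes "(goe_ball \<delta> :: ('m::finite set \<Rightarrow> real) set) \<in> sets goe_law"
  shows "emeasure (corr_goe_law 0) (goe_pair_ball \<delta> :: ('m set \<Rightarrow> real \<times> real) set)
    = emeasure goe_law (goe_ball \<delta> :: ('m set \<Rightarrow> real) set)
      * emeasure goe_law (goe_ball \<delta> :: ('m set \<Rightarrow> real) set)" (is "_ = ?rhs")
proof -
  have "emeasure (corr_goe_law 0) (goe_pair_ball \<delta> :: ('m set \<Rightarrow> real \<times> real) set)
      = emeasure (corr_goe_law 0)
          (unzip_fun sym_pairs -` (goe_ball \<delta> \<times> goe_ball \<delta>)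
             \<inter> space (corr_goe_law 0 :: ('m set \<Rightarrow> real \<times> real) measure))"
    by (simp only: vimage_unzip_fun_goe_ball)
  also have "\<dots> = emeasure (distr (corr_goe_law 0) (goe_law \<Otimes>\<^sub>M goe_law) (unzip_fun sym_pairs))
      (goe_ball \<delta> \<times> goe_ball \<delta> :: (('m set \<Rightarrow> real) \<times> ('m set \<Rightarrow> real)) set)"
    by (rule emeasure_distr[OF measurable_unzip_fun_corr_goe_law_zero pair_measureI[OF assms assms], symmetric])
  also have "\<dots> = ?rhs"
    unfolding distr_unzip_fun_corr_goe_law_zero using assms
    by (intro sigma_finite_measure.emeasure_pair_measure_Times)
       (simp_all add: prob_space_imp_sigma_finite prob_space_goe_law)
  finally show ?thesis .
qed

definition corr_density_bound :: "'m::finite itself \<Rightarrow> real \<Rightarrow> real \<Rightarrow> real" where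
  "corr_density_bound _ r \<delta> =
     (1 - r\<^sup>2) powr (- real (card (sym_pairs :: 'm set set)) / 2) * exp (\<bar>r\<bar> * real CARD('m) * \<delta>\<^sup>2)"

lemma corr_density_bound_nonneg: "0 \<le> corr_density_bound TYPE('m::finite) r \<delta>"
  by (simp add: corr_density_bound_def)

lemma sum_goe_pair_ball_exponent_le:
  fixes g :: "'m::finite set \<Rightarrow> real \<times> real"
  assumes "g \<in> goe_pair_ball \<delta>"
  shows "(\<Sum>p\<in>sym_pairs. \<bar>r\<bar> * ((fst (g p))\<^sup>2 + (snd (g p))\<^sup>2) / (2 * goe_var p))
    \<le> \<bar>r\<bar> * real CARD('m) * \<delta>\<^sup>2"
proof -
  have "\<bar>r\<bar> * ((fst (g p))\<^sup>2 + (snd (g p))\<^sup>2) / (2 * goe_var p)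
      \<le> \<bar>r\<bar> / 2 * ((fst (g p))\<^sup>2 + (snd (g p))\<^sup>2)" for p
  proof -
    have "\<bar>r\<bar> * ((fst (g p))\<^sup>2 + (snd (g p))\<^sup>2) / (2 * goe_var p)
        \<le> \<bar>r\<bar> * ((fst (g p))\<^sup>2 + (snd (g p))\<^sup>2) / 2"
      by (intro divide_left_mono) (auto simp: goe_var_def)
    then show ?thesis by simp
  qed
  then have "(\<Sum>p\<in>sym_pairs. \<bar>r\<bar> * ((fst (g p))\<^sup>2 + (snd (g p))\<^sup>2) / (2 * goe_var p))
      \<le> (\<Sum>p\<in>sym_pairs. \<bar>r\<bar> / 2 * ((fst (g p))\<^sup>2 + (snd (g p))\<^sup>2))"
    by (rule sum_mono)
  also have "\<dots> = \<bar>r\<bar> / 2 * ((\<Sum>p\<in>sym_pairs. ((fst \<circ> g) p)\<^sup>2) + (\<Sum>p\<in>sym_pairs. ((snd \<circ> g) p)\<^sup>2))"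
    by (simp only: sum_distrib_left[symmetric] sum.distrib[symmetric] comp_def)
  also have "\<dots> \<le> \<bar>r\<bar> / 2 * (real CARD('m) * \<delta>\<^sup>2 + real CARD('m) * \<delta>\<^sup>2)"
    using assms unfolding goe_pair_ball_def
    by (intro mult_left_mono add_mono sum_sym_pairs_square_le) (auto simp: comp_def)
  finally show ?thesis
    by simp
qed

lemma prod_bvn_density_le:
  fixes g :: "'m::finite set \<Rightarrow> real \<times> real"
  assumes r: "\<bar>r\<bar> < 1" and g: "g \<in> goe_pair_ball \<delta>"
  shows "(\<Prod>p\<in>sym_pairs. bvn_density (goe_var p) r (g p))
    \<le> corr_density_bound TYPE('m) r \<delta> * (\<Prod>p\<in>sym_pairs. bvn_density (goe_var p) 0 (g p))"
proof -
  let ?I = "sym_pairs :: 'm set set"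
  define c where "c = (1 - r\<^sup>2) powr (-1/2)"
  define w where "w p = \<bar>r\<bar> * ((fst (g p))\<^sup>2 + (snd (g p))\<^sup>2) / (2 * goe_var p)" for p
  have "(\<Prod>p\<in>?I. bvn_density (goe_var p) r (g p))
      \<le> (\<Prod>p\<in>?I. c * exp (w p) * bvn_density (goe_var p) 0 (g p))"
  proof (rule prod_mono)
    fix p
    show "0 \<le> bvn_density (goe_var p) r (g p)
        \<and> bvn_density (goe_var p) r (g p) \<le> c * exp (w p) * bvn_density (goe_var p) 0 (g p)"
      using bvn_density_le_uncorrelated[OF goe_var_pos r, of p "fst (g p)" "snd (g p)"]
      by (simp add: bvn_density_nonneg[OF r goe_var_pos] c_def w_def)
  qed
  also have "\<dots> = c ^ card ?I * exp (sum w ?I) * (\<Prod>p\<in>?I. bvn_density (goe_var p) 0 (g p))"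
    by (simp add: prod.distrib exp_sum)
  also have "\<dots> \<le> corr_density_bound TYPE('m) r \<delta> * (\<Prod>p\<in>?I. bvn_density (goe_var p) 0 (g p))"
  proof -
    have c_power: "c ^ card ?I = (1 - r\<^sup>2) powr (- real (card ?I) / 2)"
      using r abs_square_less_1[of r] by (simp add: c_def powr_power)
    have "exp (sum w ?I) \<le> exp (\<bar>r\<bar> * real CARD('m) * \<delta>\<^sup>2)"
      using sum_goe_pair_ball_exponent_le[OF g] by (simp add: w_def)
    moreover have "0 \<le> (\<Prod>p\<in>?I. bvn_density (goe_var p) 0 (g p))"
      by (intro prod_nonneg bvn_density_nonneg goe_var_pos) simp
    ultimately show ?thesis
      unfolding corr_density_bound_def c_power[symmetric]
      by (intro mult_right_mono mult_left_mono) (simp_all add: c_def)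
  qed
  finally show ?thesis .
qed

lemma emeasure_goe_pair_ball_le:
  assumes r: "\<bar>r\<bar> < 1" and A: "(goe_ball \<delta> :: ('m::finite set \<Rightarrow> real) set) \<in> sets goe_law"
  shows "emeasure (corr_goe_law r) (goe_pair_ball \<delta> :: ('m set \<Rightarrow> real \<times> real) set)
    \<le> ennreal (corr_density_bound TYPE('m) r \<delta>)
      * emeasure (corr_goe_law 0) (goe_pair_ball \<delta> :: ('m set \<Rightarrow> real \<times> real) set)"
proof -
  have measurable: "(\<lambda>g. \<Prod>p\<in>sym_pairs. ennreal (bvn_density (goe_var p) s (g p)))
      \<in> borel_measurable (PiM (sym_pairs :: 'm set set) (\<lambda>_. lborel))" for s
    by (rule borel_measurable_prod_component[OF borel_measurable_bvn_density])
  show ?thesis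
    unfolding corr_goe_law_eq_density
  proof (rule emeasure_density_le_cmult[OF measurable measurable])
    show "goe_pair_ball \<delta> \<in> sets (PiM (sym_pairs :: 'm set set) (\<lambda>_. lborel))"
      using goe_pair_ball_in_sets[OF A, of 0] by (simp add: sets_corr_goe_law)
  next
    fix g :: "'m set \<Rightarrow> real \<times> real" assume g: "g \<in> goe_pair_ball \<delta>"
    have "(\<Prod>p\<in>sym_pairs. ennreal (bvn_density (goe_var p) r (g p)))
        = ennreal (\<Prod>p\<in>sym_pairs. bvn_density (goe_var p) r (g p))"
      by (rule prod_ennreal) (rule bvn_density_nonneg[OF r goe_var_pos])
    also have "\<dots> \<le> ennreal (corr_density_bound TYPE('m) r \<delta> * (\<Prod>p\<in>sym_pairs. bvn_density (goe_var p) 0 (g p)))"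
      by (rule ennreal_leI) (rule prod_bvn_density_le[OF r g])
    also have "\<dots> = ennreal (corr_density_bound TYPE('m) r \<delta>)
        * (\<Prod>p\<in>sym_pairs. ennreal (bvn_density (goe_var p) 0 (g p)))"
      by (simp add: ennreal_mult' corr_density_bound_nonneg prod_ennreal bvn_density_nonneg goe_var_pos)
    finally show "(\<Prod>p\<in>sym_pairs. ennreal (bvn_density (goe_var p) r (g p)))
        \<le> ennreal (corr_density_bound TYPE('m) r \<delta>)
          * (\<Prod>p\<in>sym_pairs. ennreal (bvn_density (goe_var p) 0 (g p)))" .
  qed
qed

lemma measure_goe_pair_ball_le:
  assumes r: "\<bar>r\<bar> < 1" and A: "(goe_ball \<delta> :: ('m::finite set \<Rightarrow> real) set) \<in> sets goe_law"
  shows "measure (corr_goe_law r) (goe_pair_ball \<delta> :: ('m set \<Rightarrow> real \<times> real) set)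
    \<le> corr_density_bound TYPE('m) r \<delta> * (measure goe_law (goe_ball \<delta> :: ('m set \<Rightarrow> real) set))\<^sup>2"
    (is "?lhs \<le> ?K * ?a\<^sup>2")
proof -
  interpret goe: prob_space goe_law by (rule prob_space_goe_law)
  have "emeasure (corr_goe_law r) (goe_pair_ball \<delta> :: ('m set \<Rightarrow> real \<times> real) set)
      \<le> ennreal ?K * (emeasure goe_law (goe_ball \<delta> :: ('m set \<Rightarrow> real) set)
          * emeasure goe_law (goe_ball \<delta> :: ('m set \<Rightarrow> real) set))"
    using emeasure_goe_pair_ball_le[OF r A] by (simp only: emeasure_corr_goe_law_zero_goe_pair_ball[OF A])
  also have "\<dots> = ennreal (?K * ?a\<^sup>2)"
    by (simp add: goe.emeasure_eq_measure ennreal_mult' corr_density_bound_nonneg power2_eq_square)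
  finally have le: "emeasure (corr_goe_law r) (goe_pair_ball \<delta> :: ('m set \<Rightarrow> real \<times> real) set)
      \<le> ennreal (?K * ?a\<^sup>2)" .
  then have "emeasure (corr_goe_law r) (goe_pair_ball \<delta> :: ('m set \<Rightarrow> real \<times> real) set) = ennreal ?lhs"
    by (intro emeasure_eq_ennreal_measure) (auto simp: top_unique)
  with le show ?thesis
    by (simp add: ennreal_le_iff corr_density_bound_nonneg)
qed

lemma abs_rho_less_1:
  assumes "0 < k" and "k < n"
  shows "\<bar>rho n k\<bar> < 1"
proof -
  have "0 < 2 * real k / real n" and "2 * real k / real n < 2"
    using assms by (simp_all add: divide_less_eq)
  then show ?thesis
    unfolding rho_def by linarith
qed

lemma powr_card_sym_pairs_le:
  assumes "0 \<le> x" and "x \<le> 1"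
  shows "x powr (- real (card (sym_pairs :: 'm::finite set set)) / 2)
    \<le> x powr (- (real CARD('m) * (real CARD('m) + 1) / 4))"
proof -
  have "2 * real (card (sym_pairs :: 'm set set)) \<le> real CARD('m) * (real CARD('m) + 1)"
    using of_nat_mono[OF card_sym_pairs_le[where 'm='m]] by (simp add: algebra_simps)
  then show ?thesis
    using assms by (intro powr_mono') linarith+
qed

theorem lemma4p2:
  fixes n k :: nat and \<delta> :: real
  assumes "n \<ge> 2" and "0 < k" and "k < n" and "\<delta> > 0"
  shows "R_ratio TYPE('m::finite) n k \<delta>
           \<le> (1 - (rho n k)\<^sup>2) powr (- (real CARD('m) * (real CARD('m) + 1) / 4))
             * exp (\<bar>rho n k\<bar> * real CARD('m) * \<delta>\<^sup>2)"
proof -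
  let ?r = "rho n k"
  let ?a = "measure goe_law (goe_ball \<delta> :: ('m set \<Rightarrow> real) set)"
  have r: "\<bar>?r\<bar> < 1"
    using assms by (intro abs_rho_less_1)
  \<comment> \<open>If the ball were not measurable, its measure would be the junk value 0 and so would the ratio.\<close>
  have "R_ratio TYPE('m) n k \<delta> \<le> corr_density_bound TYPE('m) ?r \<delta>"
  proof (cases "(goe_ball \<delta> :: ('m set \<Rightarrow> real) set) \<in> sets goe_law \<and> ?a \<noteq> 0")
    case True
    then show ?thesis
      using measure_goe_pair_ball_le[OF r conjunct1[OF True]]
      by (simp add: R_ratio_eq_goe_balls pos_divide_le_eq)
  next
    case False
    then have "?a = 0"
      using measure_notin_sets by blast
    then show ?thesis
      by (simp add: R_ratio_eq_goe_balls corr_density_bound_nonneg)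
  qed
  also have "\<dots> \<le> (1 - ?r\<^sup>2) powr (- (real CARD('m) * (real CARD('m) + 1) / 4))
      * exp (\<bar>?r\<bar> * real CARD('m) * \<delta>\<^sup>2)"
    unfolding corr_density_bound_def using r abs_square_less_1[of ?r]
    by (intro mult_right_mono powr_card_sym_pairs_le) auto
  finally show ?thesis .
qed

end
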